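(* Let $D$ be a strong nonseparable digraph and let $(D_0,D_1,\ldots,D_k)$ be an ear decomposition of $D$. Let $i\in\{1,\ldots,k\}$ and let $P_{i-1}=(x_0,x_1,\ldots,x_{r-1},x_r)$ be the ear of $D_{i-1}$ in $D$ (so $D_i=D_{i-1}\cup P_{i-1}$), with $l(P_{i-1})\geq 2$. If $D_i$ has a kernel $N$ and one of the following holds: (1) $x_0,x_r\in N$; (2) $x_0\in N$ and $x_r\notin N$; (3) $x_0\notin N$, $x_r\in N$ and $l(P_{i-1})$ is even; (4) $x_0,x_r\notin N$ and $l(P_{i-1})$ is odd; then $D_{i-1}$ has a kernel.
   Context: All digraphs are finite, without loops or multiple arcs. Paths and cycles are directed; the length $l(P)$ of a path $P$ is its number of arcs. A digraph is strong if for every ordered pair of vertices $x,y$ there is a directed path from $x$ to $y$; it is nonseparable if its underlying undirected graph is nonseparable (has no cut vertex). For a subdigraph $H$ of $D$, an ear of $H$ in $D$ is a directed path $(x_0,\ldots,x_r)$ in $D$ whose end vertices lie in $H$ and whose internal vertices do not lie in $H$. An ear decomposition of a nonseparable strong digraph $D$ is a sequence $(D_0,\ldots,D_k)$ of nonseparable strong subdigraphs of $D$ such that $D_0$ is a directed cycle, $D_{j+1}=D_j\cup P_j$ with $P_j$ an ear of $D_j$ in $D$ for each $j\in\{0,\ldots,k-1\}$, and $D_k=D$. A kernel of a digraph is a set $N$ of vertices that is independent (no arc between two of its vertices) and absorbent (every vertex not in $N$ has an out-neighbour in $N$). *)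

theory Defs
  imports Main
begin

type_synonym 'a digraph = "'a set \<times> ('a \<times> 'a) set"

definition verts :: "'a digraph \<Rightarrow> 'a set" where "verts D = fst D"
definition arcs :: "'a digraph \<Rightarrow> ('a \<times> 'a) set" where "arcs D = snd D"

definition digraph :: "'a digraph \<Rightarrow> bool" where
  "digraph D \<longleftrightarrow> finite (verts D) \<and> arcs D \<subseteq> verts D \<times> verts D
     \<and> (\<forall>x. (x, x) \<notin> arcs D)"

definition subdigraph :: "'a digraph \<Rightarrow> 'a digraph \<Rightarrow> bool" where
  "subdigraph H D \<longleftrightarrow> digraph H \<and> verts H \<subseteq> verts D \<and> arcs H \<subseteq> arcs D"

definition path_arcs :: "'a list \<Rightarrow> ('a \<times> 'a) set" where
  "path_arcs xs = set (zip xs (tl xs))"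

definition add_path :: "'a digraph \<Rightarrow> 'a list \<Rightarrow> 'a digraph" where
  "add_path H xs = (verts H \<union> set xs, arcs H \<union> path_arcs xs)"

definition dpath :: "'a digraph \<Rightarrow> 'a list \<Rightarrow> bool" where
  "dpath D xs \<longleftrightarrow> xs \<noteq> [] \<and> distinct xs \<and> set xs \<subseteq> verts D
     \<and> (\<forall>i. Suc i < length xs \<longrightarrow> (xs ! i, xs ! Suc i) \<in> arcs D)"

definition plen :: "'a list \<Rightarrow> nat" where "plen xs = length xs - 1"

definition strong :: "'a digraph \<Rightarrow> bool" where
  "strong D \<longleftrightarrow> (\<forall>x\<in>verts D. \<forall>y\<in>verts D. (x, y) \<in> (arcs D \<inter> verts D \<times> verts D)\<^sup>*)"

definition uconnected_on :: "'a set \<Rightarrow> ('a \<times> 'a) set \<Rightarrow> bool" where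
  "uconnected_on S A \<longleftrightarrow> (\<forall>x\<in>S. \<forall>y\<in>S. (x, y) \<in> ((A \<union> A\<inverse>) \<inter> S \<times> S)\<^sup>*)"

definition nonseparable :: "'a digraph \<Rightarrow> bool" where
  "nonseparable D \<longleftrightarrow> uconnected_on (verts D) (arcs D)
     \<and> (\<forall>v\<in>verts D. uconnected_on (verts D - {v}) (arcs D))"

definition dcycle :: "'a digraph \<Rightarrow> bool" where
  "dcycle D \<longleftrightarrow> (\<exists>cs. length cs \<ge> 2 \<and> distinct cs \<and> verts D = set cs
     \<and> arcs D = {(cs ! i, cs ! ((i + 1) mod length cs)) | i. i < length cs})"

definition ear :: "'a digraph \<Rightarrow> 'a digraph \<Rightarrow> 'a list \<Rightarrow> bool" where
  "ear H D xs \<longleftrightarrow> dpath D xs \<and> hd xs \<in> verts H \<and> last xs \<in> verts H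
     \<and> (\<forall>i. 0 < i \<and> i < plen xs \<longrightarrow> xs ! i \<notin> verts H)"

definition ear_decomposition ::
  "'a digraph \<Rightarrow> (nat \<Rightarrow> 'a digraph) \<Rightarrow> (nat \<Rightarrow> 'a list) \<Rightarrow> nat \<Rightarrow> bool" where
  "ear_decomposition D Ds Ps k \<longleftrightarrow>
     (\<forall>j\<le>k. subdigraph (Ds j) D \<and> nonseparable (Ds j) \<and> strong (Ds j))
     \<and> dcycle (Ds 0)
     \<and> (\<forall>j<k. ear (Ds j) D (Ps j) \<and> Ds (Suc j) = add_path (Ds j) (Ps j))
     \<and> Ds k = D"

definition kernel :: "'a digraph \<Rightarrow> 'a set \<Rightarrow> bool" where
  "kernel D N \<longleftrightarrow> N \<subseteq> verts D
     \<and> (\<forall>x\<in>N. \<forall>y\<in>N. (x, y) \<notin> arcs D)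
     \<and> (\<forall>x\<in>verts D - N. \<exists>y\<in>N. (x, y) \<in> arcs D)"

end

theory Submission
  imports Defs
begin

text \<open>Each interior vertex of the ear has the next vertex of the ear as its only out-neighbour
  in \<open>D\<^sub>i\<close>, so the kernel \<open>N\<close> alternates along the interior; given the parity of the ear,
  the endpoint conditions then force \<open>x\<^sub>1 \<notin> N\<close> whenever \<open>x\<^sub>0 \<notin> N\<close>. Since \<open>(x\<^sub>0, x\<^sub>1)\<close> is the
  only new arc leaving a vertex of \<open>D\<^sub>i\<^sub>-\<^sub>1\<close>, the set \<open>N \<inter> V(D\<^sub>i\<^sub>-\<^sub>1)\<close> is a kernel of \<open>D\<^sub>i\<^sub>-\<^sub>1\<close>.\<close>

lemma in_path_arcs_iff:
  "(a, b) \<in> path_arcs xs \<longleftrightarrow> (\<exists>m. Suc m < length xs \<and> a = xs ! m \<and> b = xs ! Suc m)"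
  unfolding path_arcs_def by (auto simp: in_set_zip nth_tl; force)

lemma arcs_add_path: "arcs (add_path H P) = arcs H \<union> path_arcs P"
  by (simp add: add_path_def arcs_def)

lemma verts_add_path: "verts (add_path H P) = verts H \<union> set P"
  by (simp add: add_path_def verts_def)

lemma ear_index_in_base_eq_0:
  assumes "ear H D P" and "P ! m \<in> verts H" and "Suc m < length P"
  shows "m = 0"
  using assms by (auto simp: ear_def plen_def)

lemma ear_interior_out_arc:
  assumes "digraph H" and ear: "ear H D P" and "0 < j" and "j < plen P"
    and arc: "(P ! j, y) \<in> arcs (add_path H P)"
  shows "y = P ! Suc j"
proof -
  have "P ! j \<notin> verts H" using ear assms(3,4) by (simp add: ear_def)
  with \<open>digraph H\<close> have "(P ! j, y) \<notin> arcs H" by (auto simp: digraph_def)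
  with arc obtain m where m: "Suc m < length P" "P ! j = P ! m" "y = P ! Suc m"
    by (auto simp: arcs_add_path in_path_arcs_iff)
  have "distinct P" using ear by (simp add: ear_def dpath_def)
  with m \<open>j < plen P\<close> have "j = m" by (simp add: plen_def nth_eq_iff_index_eq)
  with m show ?thesis by simp
qed

lemma kernel_alternates_on_ear:
  assumes "kernel (add_path H P) N" and "digraph H" and "ear H D P"
    and "0 < j" and "j < plen P"
  shows "P ! Suc j \<in> N \<longleftrightarrow> P ! j \<notin> N"
proof
  have "(P ! j, P ! Suc j) \<in> path_arcs P"
    unfolding in_path_arcs_iff using \<open>j < plen P\<close> by (intro exI[of _ j]) (simp add: plen_def)
  then have "(P ! j, P ! Suc j) \<in> arcs (add_path H P)" by (simp add: arcs_add_path)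
  then show "P ! Suc j \<in> N \<Longrightarrow> P ! j \<notin> N" using assms(1) by (auto simp: kernel_def)
  assume "P ! j \<notin> N"
  moreover have "P ! j \<in> verts (add_path H P)"
    using \<open>j < plen P\<close> by (simp add: verts_add_path plen_def)
  ultimately obtain y where "y \<in> N" "(P ! j, y) \<in> arcs (add_path H P)"
    using assms(1) unfolding kernel_def by blast
  with ear_interior_out_arc[OF assms(2-5)] show "P ! Suc j \<in> N" by blast
qed

lemma alternating_parity:
  fixes f :: "nat \<Rightarrow> bool"
  assumes alt: "\<And>j. 0 < j \<Longrightarrow> j < r \<Longrightarrow> f (Suc j) \<longleftrightarrow> \<not> f j" and "j < r"
  shows "f (Suc j) \<longleftrightarrow> (f 1 \<longleftrightarrow> even j)"
  using \<open>j < r\<close>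
proof (induction j)
  case 0
  then show ?case by simp
next
  case (Suc j)
  then show ?case using alt[of "Suc j"] by simp
qed

lemma ear_second_vertex_notin_kernel:
  assumes "kernel (add_path H P) N" and "digraph H" and "ear H D P" and "plen P \<ge> 2"
    and "(last P \<in> N \<and> even (plen P)) \<or> (last P \<notin> N \<and> odd (plen P))"
  shows "P ! 1 \<notin> N"
proof -
  let ?r = "plen P"
  have "P \<noteq> []" using \<open>ear H D P\<close> by (simp add: ear_def dpath_def)
  moreover have "Suc (?r - 1) = ?r" using \<open>?r \<ge> 2\<close> by simp
  ultimately have last: "last P = P ! Suc (?r - 1)" by (metis last_conv_nth plen_def)
  have "P ! Suc (?r - 1) \<in> N \<longleftrightarrow> (P ! 1 \<in> N \<longleftrightarrow> even (?r - 1))"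
  proof (rule alternating_parity[where f = "\<lambda>j. P ! j \<in> N" and r = ?r])
    show "P ! Suc j \<in> N \<longleftrightarrow> P ! j \<notin> N" if "0 < j" "j < ?r" for j
      using kernel_alternates_on_ear[OF assms(1-3) that] .
    show "?r - 1 < ?r" using \<open>?r \<ge> 2\<close> by simp
  qed
  with assms(4,5) last show ?thesis by auto
qed

lemma kernel_restrict_to_ear_base:
  assumes K: "kernel (add_path H P) N" and "digraph H" and ear: "ear H D P"
    and first_arc: "hd P \<in> N \<or> P ! 1 \<notin> N"
  shows "kernel H (N \<inter> verts H)"
  unfolding kernel_def
proof (intro conjI ballI)
  show "N \<inter> verts H \<subseteq> verts H" by blast
  show "(x, y) \<notin> arcs H" if "x \<in> N \<inter> verts H" "y \<in> N \<inter> verts H" for x y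
    using K that by (auto simp: kernel_def arcs_add_path)
  fix x assume x: "x \<in> verts H - N \<inter> verts H"
  then obtain y where y: "y \<in> N" "(x, y) \<in> arcs (add_path H P)"
    using K unfolding kernel_def verts_add_path by blast
  show "\<exists>y\<in>N \<inter> verts H. (x, y) \<in> arcs H"
  proof (cases "(x, y) \<in> arcs H")
    case True
    with y \<open>digraph H\<close> show ?thesis by (auto simp: digraph_def)
  next
    case False
    with y obtain m where m: "Suc m < length P" "x = P ! m" "y = P ! Suc m"
      by (auto simp: arcs_add_path in_path_arcs_iff)
    with x ear_index_in_base_eq_0[OF ear] have "m = 0" by blast
    moreover have "hd P = P ! 0" using m(1) by (cases P) auto
    ultimately have "hd P \<notin> N" "P ! 1 \<in> N" using m x y by auto
    with first_arc show ?thesis by blast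
  qed
qed

theorem mainTheorem6:
  fixes D :: "'a digraph" and Ds :: "nat \<Rightarrow> 'a digraph" and Ps :: "nat \<Rightarrow> 'a list"
    and k i :: nat and N :: "'a set"
  assumes "digraph D" and "strong D" and "nonseparable D"
    and "ear_decomposition D Ds Ps k"
    and "1 \<le> i" and "i \<le> k"
    and "plen (Ps (i - 1)) \<ge> 2"
    and "kernel (Ds i) N"
    and "(hd (Ps (i - 1)) \<in> N \<and> last (Ps (i - 1)) \<in> N)
       \<or> (hd (Ps (i - 1)) \<in> N \<and> last (Ps (i - 1)) \<notin> N)
       \<or> (hd (Ps (i - 1)) \<notin> N \<and> last (Ps (i - 1)) \<in> N \<and> even (plen (Ps (i - 1))))
       \<or> (hd (Ps (i - 1)) \<notin> N \<and> last (Ps (i - 1)) \<notin> N \<and> odd (plen (Ps (i - 1))))"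
  shows "\<exists>N'. kernel (Ds (i - 1)) N'"
proof -
  let ?H = "Ds (i - 1)" and ?P = "Ps (i - 1)"
  have "i - 1 < k" using assms(5,6) by simp
  with assms(4) have "digraph ?H" and ear: "ear ?H D ?P" and "Ds i = add_path ?H ?P"
    using assms(5) by (auto simp: ear_decomposition_def subdigraph_def)
  with assms(8) have K: "kernel (add_path ?H ?P) N" by simp
  have "hd ?P \<in> N \<or> ?P ! 1 \<notin> N"
    using ear_second_vertex_notin_kernel[OF K \<open>digraph ?H\<close> ear assms(7)] assms(9) by blast
  with K \<open>digraph ?H\<close> ear have "kernel ?H (N \<inter> verts ?H)"
    by (rule kernel_restrict_to_ear_base)
  then show ?thesis by blast
qed

end
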